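(* Let $n\ge 1$, $r_0>0$, $\kappa\in(0,1)$, $\mathscr C:=C([-r_0,0];\mathbb R^n)$ with $\|f\|_\infty:=\sup_{-r_0\le\theta\le0}|f(\theta)|$, and $L\phi:=\kappa\int_{-r_0}^0\phi(\theta)\,\mathrm d\theta$ for $\phi\in\mathscr C$. Let $Z:\mathbb R^n\to\mathbb R^n$, $b:\mathscr C\to\mathbb R^n$ be measurable, $\sigma\in\mathbb R^n\otimes\mathbb R^n$ invertible, $W$ an $n$-dimensional Brownian motion. Assume there are $L_1,L_2>0$ with $|Z(x)-Z(y)|\le L_1|x-y|$, $|b(\xi)-b(\eta)|\le L_2\|\xi-\eta\|_\infty$, and constants $\lambda_1>\lambda_2>0$ with $$2\langle Z(\xi(0))-Z(\eta(0))+b(\xi)-b(\eta),\ \xi(0)-\eta(0)+L(\xi-\eta)\rangle\le \lambda_2\|\xi-\eta\|_\infty^2-\lambda_1|\xi(0)-\eta(0)|^2$$ for all $x,y\in\mathbb R^n$, $\xi,\eta\in\mathscr C$. With $\rho:=\lambda_1/(1+\kappa)$ assume $1-\kappa r_0^2e^{\rho r_0}>0$ and $$\lambda:=\rho-\frac{(\kappa r_0^2\lambda_1+\lambda_2)e^{\rho r_0}}{(1-\kappa)(1-\kappa r_0^2e^{\rho r_0})}>0.$$ For $\xi\in\mathscr C$ let $X_t(\xi)$ be the segment process ($X_t(\xi)(\theta)=X(t+\theta;\xi)$) of the solution of $\mathrm d\{X(t)+LX_t\}=\{Z(X(t))+b(X_t)\}\mathrm dt+\sigma\,\mathrm dW(t)$,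 $X_0=\xi$, all driven by the same Brownian motion $W$. Then there exists $c>0$ such that for all $\xi,\eta\in\mathscr C$ and $t\ge0$, $$\|X_t(\xi)-X_t(\eta)\|_\infty^2\le c\,e^{-\lambda t}\|\xi-\eta\|_\infty^2.$$ *)

theory Defs
  imports "HOL-Analysis.Analysis"
begin

definition supnorm :: "real \<Rightarrow> (real \<Rightarrow> real^'n) \<Rightarrow> real" where
  "supnorm r0 f = (SUP \<theta>\<in>{-r0..0}. norm (f \<theta>))"

definition seg :: "(real \<Rightarrow> real^'n) \<Rightarrow> real \<Rightarrow> (real \<Rightarrow> real^'n)" where
  "seg X t = (\<lambda>\<theta>. X (t + \<theta>))"

definition Lop :: "real \<Rightarrow> real \<Rightarrow> (real \<Rightarrow> real^'n) \<Rightarrow> real^'n" where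
  "Lop r0 \<kappa> \<phi> = \<kappa> *\<^sub>R integral {-r0..0} \<phi>"

text \<open>X solves d{X(t) + L X_t} = {Z(X(t)) + b(X_t)} dt + sigma dW(t), X_0 = xi,
  pathwise along the (continuous) driving path w; since the noise is additive,
  the stochastic integral of sigma dW over [0,t] is sigma (w t - w 0).\<close>
definition is_solution ::
  "real \<Rightarrow> real \<Rightarrow> (real^'n \<Rightarrow> real^'n) \<Rightarrow> ((real \<Rightarrow> real^'n) \<Rightarrow> real^'n)
   \<Rightarrow> real^'n^'n \<Rightarrow> (real \<Rightarrow> real^'n) \<Rightarrow> (real \<Rightarrow> real^'n) \<Rightarrow> (real \<Rightarrow> real^'n) \<Rightarrow> bool" where
  "is_solution r0 \<kappa> Z b \<sigma> w \<xi> X \<longleftrightarrow>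
     continuous_on {-r0..} X \<and>
     (\<forall>\<theta>\<in>{-r0..0}. X \<theta> = \<xi> \<theta>) \<and>
     (\<forall>t\<ge>0. (\<lambda>s. Z (X s) + b (seg X s)) integrable_on {0..t} \<and>
        X t + Lop r0 \<kappa> (seg X t) =
          \<xi> 0 + Lop r0 \<kappa> \<xi> + integral {0..t} (\<lambda>s. Z (X s) + b (seg X s))
          + \<sigma> *v (w t - w 0))"

end

theory Submission
  imports Defs
begin

(* Let D = X - Y. Both solutions are driven by the same path, so the noise cancels and
   M(t) := D(t) + L D_t = M(0) + \<integral>\<^sub>0\<^sup>t g for the drift difference g. The monotonicity
   condition together with |L D_t| \<le> \<kappa> r0 \<parallel>D_t\<parallel> gives \<rho> |M|\<^sup>2 + 2 \<langle>g, M\<rangle> \<le> K \<parallel>D_t\<parallel>\<^sup>2, hence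
   exp(\<rho> t) |M(t)|\<^sup>2 \<le> |M(0)|\<^sup>2 + K \<integral>\<^sub>0\<^sup>t \<phi>  with  \<phi>(s) = exp(\<rho> s) \<parallel>D_s\<parallel>\<^sup>2.
   Conversely |D(u)|\<^sup>2 \<le> |M(u)|\<^sup>2/(1-\<kappa>) + \<kappa> r0\<^sup>2 \<parallel>D_u\<parallel>\<^sup>2, and after weighting with exp(\<rho> u) the
   last term is at most q = \<kappa> r0\<^sup>2 exp(\<rho> r0) times the supremum W(t) of exp(\<rho> u) |D(u)|\<^sup>2
   over the window [-r0, t]. Taking the supremum over u and using q < 1 gives
   \<phi>(t) \<le> c \<parallel>\<xi> - \<eta>\<parallel>\<^sup>2 + \<beta> \<integral>\<^sub>0\<^sup>t \<phi>, and Gronwall's inequality yields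
   \<phi>(t) \<le> c \<parallel>\<xi> - \<eta>\<parallel>\<^sup>2 exp(\<beta> t), i.e. \<parallel>D_t\<parallel>\<^sup>2 decays at rate \<rho> - \<beta>. *)

lemma norm_le_supnorm:
  assumes "continuous_on {-r0..0} f" "\<theta> \<in> {-r0..0}"
  shows "norm (f \<theta>) \<le> supnorm r0 f"
proof -
  have "bdd_above ((\<lambda>\<theta>. norm (f \<theta>)) ` {-r0..0})"
    by (intro bounded_imp_bdd_above compact_imp_bounded compact_continuous_image
        continuous_intros assms) auto
  then show ?thesis
    unfolding supnorm_def using assms(2) by (rule cSUP_upper2) simp
qed

lemma supnorm_nonneg:
  assumes "continuous_on {-r0..0} f" "r0 \<ge> 0"
  shows "0 \<le> supnorm r0 f"
  using norm_le_supnorm[OF assms(1), of 0] assms(2)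
  by (simp add: order_trans[OF norm_ge_zero])

lemma supnorm_le:
  assumes "r0 \<ge> 0" "\<And>\<theta>. \<theta> \<in> {-r0..0} \<Longrightarrow> norm (f \<theta>) \<le> B"
  shows "supnorm r0 f \<le> B"
  unfolding supnorm_def using assms by (intro cSUP_least) auto

lemma power2_supnorm_le:
  assumes "continuous_on {-r0..0} f" "r0 \<ge> 0"
    and "\<And>\<theta>. \<theta> \<in> {-r0..0} \<Longrightarrow> (norm (f \<theta>))\<^sup>2 \<le> B"
  shows "(supnorm r0 f)\<^sup>2 \<le> B"
proof -
  have "supnorm r0 f \<le> sqrt B"
    using assms(2,3) by (intro supnorm_le) (auto simp: real_le_rsqrt)
  moreover have "B \<ge> 0"
    using assms(2) assms(3)[of 0] by (auto intro: order_trans[OF zero_le_power2])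
  ultimately show ?thesis
    using supnorm_nonneg[OF assms(1,2)] by (metis power_mono real_sqrt_pow2)
qed

lemma supnorm_le_add_diff:
  assumes "continuous_on {-r0..0} f" "continuous_on {-r0..0} g" "r0 \<ge> 0"
  shows "supnorm r0 f \<le> supnorm r0 g + supnorm r0 (\<lambda>\<theta>. f \<theta> - g \<theta>)"
proof (rule supnorm_le[OF assms(3)])
  fix \<theta> assume \<theta>: "\<theta> \<in> {-r0..0}"
  have "norm (f \<theta>) \<le> norm (g \<theta>) + norm (f \<theta> - g \<theta>)"
    using norm_triangle_ineq[of "g \<theta>" "f \<theta> - g \<theta>"] by simp
  also have "\<dots> \<le> supnorm r0 g + supnorm r0 (\<lambda>\<theta>. f \<theta> - g \<theta>)"
    using \<theta> assms by (intro add_mono norm_le_supnorm continuous_intros)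
  finally show "norm (f \<theta>) \<le> \<dots>" .
qed

lemma abs_supnorm_diff_le:
  assumes "continuous_on {-r0..0} f" "continuous_on {-r0..0} g" "r0 \<ge> 0"
  shows "\<bar>supnorm r0 f - supnorm r0 g\<bar> \<le> supnorm r0 (\<lambda>\<theta>. f \<theta> - g \<theta>)"
proof -
  have "supnorm r0 (\<lambda>\<theta>. g \<theta> - f \<theta>) = supnorm r0 (\<lambda>\<theta>. f \<theta> - g \<theta>)"
    by (simp add: supnorm_def norm_minus_commute)
  then show ?thesis
    using supnorm_le_add_diff[OF assms] supnorm_le_add_diff[OF assms(2,1,3)] by linarith
qed

lemma continuous_on_seg:
  fixes X :: "real \<Rightarrow> real^'n"
  assumes "continuous_on {-r0..t} X" "0 \<le> s" "s \<le> t"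
  shows "continuous_on {-r0..0} (seg X s)"
  unfolding seg_def
  by (rule continuous_on_compose2[OF assms(1)]) (use assms(2,3) in \<open>auto intro!: continuous_intros\<close>)

lemma continuous_on_seg_atLeast:
  fixes X :: "real \<Rightarrow> real^'n"
  assumes "continuous_on {-r0..} X" "s \<ge> 0"
  shows "continuous_on {-r0..0} (seg X s)"
  using assms by (intro continuous_on_seg[of r0 s] continuous_on_subset[OF assms(1)]) auto

lemma continuous_on_seg_compose:
  fixes X :: "real \<Rightarrow> real^'n" and F :: "(real \<Rightarrow> real^'n) \<Rightarrow> 'b::metric_space"
  assumes X: "continuous_on {-r0..} X" and "r0 \<ge> 0" "C > 0"
    and F: "\<And>\<xi> \<eta>. continuous_on {-r0..0} \<xi> \<Longrightarrow> continuous_on {-r0..0} \<eta> \<Longrightarrow>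
          dist (F \<xi>) (F \<eta>) \<le> C * supnorm r0 (\<lambda>\<theta>. \<xi> \<theta> - \<eta> \<theta>)"
  shows "continuous_on {0..} (\<lambda>s. F (seg X s))"
  unfolding continuous_on_iff
proof (intro ballI allI impI)
  fix s e :: real assume s: "s \<in> {0..}" and e: "e > 0"
  have X': "continuous_on {-r0..s+1} X"
    by (rule continuous_on_subset[OF X]) auto
  have "uniformly_continuous_on {-r0..s+1} X"
    by (rule compact_uniformly_continuous[OF X']) auto
  moreover have "e / (2 * C) > 0" using e \<open>C > 0\<close> by simp
  ultimately obtain d where d: "d > 0"
    "\<And>x x'. x \<in> {-r0..s+1} \<Longrightarrow> x' \<in> {-r0..s+1} \<Longrightarrow> dist x' x < d \<Longrightarrow> dist (X x') (X x) < e / (2 * C)"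
    unfolding uniformly_continuous_on_def by metis
  show "\<exists>d>0. \<forall>s'\<in>{0..}. dist s' s < d \<longrightarrow> dist (F (seg X s')) (F (seg X s)) < e"
  proof (intro exI[of _ "min d 1"] conjI ballI impI)
    fix s' assume s': "s' \<in> {0..}" "dist s' s < min d 1"
    have "supnorm r0 (\<lambda>\<theta>. seg X s' \<theta> - seg X s \<theta>) \<le> e / (2 * C)"
    proof (rule supnorm_le[OF \<open>r0 \<ge> 0\<close>])
      fix \<theta> assume "\<theta> \<in> {-r0..0}"
      then show "norm (seg X s' \<theta> - seg X s \<theta>) \<le> e / (2 * C)"
        using s s' d(2)[of "s + \<theta>" "s' + \<theta>"] by (force simp: seg_def dist_norm)
    qed
    then have "dist (F (seg X s')) (F (seg X s)) \<le> C * (e / (2 * C))"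
      using s s' \<open>C > 0\<close> X'
    by (intro order_trans[OF F] mult_left_mono continuous_on_seg) (auto simp: dist_real_def)
    also have "\<dots> < e" using e \<open>C > 0\<close> by simp
    finally show "dist (F (seg X s')) (F (seg X s)) < e" .
  qed (use d in auto)
qed

lemma norm_Lop_le:
  assumes "continuous_on {-r0..0} f" "r0 \<ge> 0" "\<kappa> \<ge> 0"
  shows "norm (Lop r0 \<kappa> f) \<le> \<kappa> * r0 * supnorm r0 f"
proof -
  have "norm (integral {-r0..0} f) \<le> supnorm r0 f * (0 - - r0)"
    using assms by (intro integral_bound norm_le_supnorm) auto
  then show ?thesis
    unfolding Lop_def using assms(3) by (simp add: mult_left_mono mult.commute mult.left_commute)
qed

lemma Lop_diff:
  assumes "continuous_on {-r0..0} f" "continuous_on {-r0..0} g"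
  shows "Lop r0 \<kappa> (\<lambda>\<theta>. f \<theta> - g \<theta>) = Lop r0 \<kappa> f - Lop r0 \<kappa> g"
  unfolding Lop_def using assms
  by (simp add: integral_diff integrable_continuous_real scaleR_diff_right)

lemma power2_add_le_weighted:
  fixes x y t :: real
  assumes "0 < t" "t < 1"
  shows "(x + y)\<^sup>2 \<le> x\<^sup>2 / t + y\<^sup>2 / (1 - t)"
proof -
  have "t * (1 - t) * (x + y)\<^sup>2 \<le> (1 - t) * x\<^sup>2 + t * y\<^sup>2"
    using zero_le_power2[of "(1 - t) * x - t * y"] by (simp add: power2_eq_square algebra_simps)
  then show ?thesis
    using assms by (simp add: field_simps)
qed

lemma has_real_derivative_power2_norm:
  fixes M :: "real \<Rightarrow> 'a::real_inner"
  assumes "(M has_vector_derivative M') (at v within S)"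
  shows "((\<lambda>x. (norm (M x))\<^sup>2) has_real_derivative 2 * inner M' (M v)) (at v within S)"
proof -
  have d: "(M has_derivative (\<lambda>h. h *\<^sub>R M')) (at v within S)"
    using assms by (simp add: has_vector_derivative_def)
  have "((\<lambda>x. inner (M x) (M x)) has_derivative
      (\<lambda>h. inner (M v) (h *\<^sub>R M') + inner (h *\<^sub>R M') (M v))) (at v within S)"
    by (rule has_derivative_inner[OF d d])
  then have "((\<lambda>x. inner (M x) (M x)) has_derivative (*) (2 * inner M' (M v))) (at v within S)"
    by (rule has_derivative_eq_rhs) (simp add: fun_eq_iff inner_commute algebra_simps)
  then show ?thesis
    unfolding has_field_derivative_def power2_norm_eq_inner .
qed

lemma has_vector_derivative_integral_at:
  fixes f :: "real \<Rightarrow> 'a::banach"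
  assumes "continuous_on {a..b} f" "a < v" "v < b"
  shows "((\<lambda>u. integral {a..u} f) has_vector_derivative f v) (at v)"
proof -
  have "((\<lambda>u. integral {a..u} f) has_vector_derivative f v) (at v within {a..b})"
    using assms by (intro integral_has_vector_derivative) auto
  moreover have "v \<in> interior {a..b}" using assms(2,3) by simp
  ultimately show ?thesis using at_within_interior by metis
qed

lemma has_real_derivative_integral_at:
  assumes "continuous_on {a..b} f" "a < v" "v < b"
  shows "((\<lambda>u. integral {a..u} f) has_real_derivative f v) (at v)"
  using has_vector_derivative_integral_at[OF assms]
  by (simp add: has_real_derivative_iff_has_vector_derivative)

lemma continuous_on_integral:
  fixes f :: "real \<Rightarrow> 'a::banach"
  assumes "continuous_on {a..b} f"
  shows "continuous_on {a..b} (\<lambda>u. integral {a..u} f)"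
  using assms by (intro indefinite_integral_continuous_1 integrable_continuous_real)

lemma exp_weighted_norm_power2_le:
  fixes M g :: "real \<Rightarrow> 'a::real_inner" and \<psi> :: "real \<Rightarrow> real"
  assumes "u \<ge> 0" "continuous_on {0..u} M" "continuous_on {0..u} \<psi>"
    and M': "\<And>v. 0 < v \<Longrightarrow> v < u \<Longrightarrow> (M has_vector_derivative g v) (at v)"
    and dissip: "\<And>v. 0 < v \<Longrightarrow> v < u \<Longrightarrow> \<rho> * (norm (M v))\<^sup>2 + 2 * inner (g v) (M v) \<le> \<psi> v"
  shows "exp (\<rho> * u) * (norm (M u))\<^sup>2
    \<le> (norm (M 0))\<^sup>2 + integral {0..u} (\<lambda>s. exp (\<rho> * s) * \<psi> s)"
proof -
  define H where "H v = exp (\<rho> * v) * (norm (M v))\<^sup>2 - integral {0..v} (\<lambda>s. exp (\<rho> * s) * \<psi> s)"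
    for v
  have "H u \<le> H 0"
  proof (rule DERIV_nonpos_imp_decreasing_open[OF \<open>u \<ge> 0\<close>])
    show "continuous_on {0..u} H"
      unfolding H_def using assms(2,3) by (intro continuous_intros continuous_on_integral)
  next
    fix v :: real assume v: "0 < v" "v < u"
    have d_exp: "((\<lambda>x. exp (\<rho> * x)) has_real_derivative exp (\<rho> * v) * \<rho>) (at v)"
      by (auto intro!: derivative_eq_intros)
    have d_int: "((\<lambda>x. integral {0..x} (\<lambda>s. exp (\<rho> * s) * \<psi> s)) has_real_derivative
        exp (\<rho> * v) * \<psi> v) (at v)"
      using v assms(3) by (intro has_real_derivative_integral_at[of 0 u]) (auto intro!: continuous_intros)
    have "(H has_real_derivative
        exp (\<rho> * v) * \<rho> * (norm (M v))\<^sup>2 + exp (\<rho> * v) * (2 * inner (g v) (M v))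
          - exp (\<rho> * v) * \<psi> v) (at v)"
      unfolding H_def
      by (rule DERIV_cong[OF DERIV_diff[OF DERIV_mult[OF d_exp
            has_real_derivative_power2_norm[OF M'[OF v]]] d_int]]) (simp add: algebra_simps)
    moreover have "exp (\<rho> * v) * \<rho> * (norm (M v))\<^sup>2 + exp (\<rho> * v) * (2 * inner (g v) (M v))
        - exp (\<rho> * v) * \<psi> v \<le> 0"
      using mult_left_mono[OF dissip[OF v], of "exp (\<rho> * v)"] by (simp add: algebra_simps)
    ultimately show "\<exists>y. (H has_real_derivative y) (at v) \<and> y \<le> 0" by blast
  qed
  then show ?thesis by (simp add: H_def)
qed

lemma gronwall_exp:
  fixes \<phi> :: "real \<Rightarrow> real"
  assumes "continuous_on {0..t} \<phi>" "\<beta> > 0" "t \<ge> 0"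
    and bound: "\<And>s. 0 \<le> s \<Longrightarrow> s \<le> t \<Longrightarrow> \<phi> s \<le> a + \<beta> * integral {0..s} \<phi>"
  shows "\<phi> t \<le> a * exp (\<beta> * t)"
proof -
  define F where "F v = integral {0..v} \<phi>" for v
  define G where "G v = (F v + a / \<beta>) * exp (- (\<beta> * v))" for v
  have "G t \<le> G 0"
  proof (rule DERIV_nonpos_imp_decreasing_open[OF \<open>t \<ge> 0\<close>])
    show "continuous_on {0..t} G"
      unfolding G_def F_def using assms(1) by (intro continuous_intros continuous_on_integral)
  next
    fix v :: real assume v: "0 < v" "v < t"
    have "(G has_real_derivative
        \<phi> v * exp (- (\<beta> * v)) - (F v + a / \<beta>) * exp (- (\<beta> * v)) * \<beta>) (at v)"
      unfolding G_def F_def using has_real_derivative_integral_at[OF assms(1) v]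
      by (auto intro!: derivative_eq_intros)
    moreover have "\<phi> v * exp (- (\<beta> * v)) - (F v + a / \<beta>) * exp (- (\<beta> * v)) * \<beta>
        = exp (- (\<beta> * v)) * (\<phi> v - a - \<beta> * F v)"
      using \<open>\<beta> > 0\<close> by (simp add: field_simps)
    moreover have "\<phi> v - a - \<beta> * F v \<le> 0"
      using bound[of v] v by (simp add: F_def)
    ultimately show "\<exists>y. (G has_real_derivative y) (at v) \<and> y \<le> 0"
      by (metis mult_nonneg_nonpos exp_ge_zero)
  qed
  then have "F t + a / \<beta> \<le> a / \<beta> * exp (\<beta> * t)"
    by (simp add: G_def F_def exp_minus field_simps)
  then have "\<beta> * (F t + a / \<beta>) \<le> \<beta> * (a / \<beta> * exp (\<beta> * t))"
    using \<open>\<beta> > 0\<close> by (intro mult_left_mono) auto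
  then have "a + \<beta> * F t \<le> a * exp (\<beta> * t)"
    using \<open>\<beta> > 0\<close> by (simp add: distrib_left)
  then show ?thesis
    using bound[of t] \<open>t \<ge> 0\<close> by (simp add: F_def)
qed

lemma exp_mult_power2_supnorm_seg_le:
  fixes D :: "real \<Rightarrow> real^'n"
  assumes "continuous_on {-r0..t} D" "r0 \<ge> 0" "\<rho> \<ge> 0" "0 \<le> s" "s \<le> t"
  shows "exp (\<rho> * s) * (supnorm r0 (seg D s))\<^sup>2
    \<le> exp (\<rho> * r0) * (SUP u\<in>{-r0..t}. exp (\<rho> * u) * (norm (D u))\<^sup>2)"
proof -
  define W where "W = (SUP u\<in>{-r0..t}. exp (\<rho> * u) * (norm (D u))\<^sup>2)"
  have bdd: "bdd_above ((\<lambda>u. exp (\<rho> * u) * (norm (D u))\<^sup>2) ` {-r0..t})"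
    by (intro bounded_imp_bdd_above compact_imp_bounded compact_continuous_image
        continuous_intros assms(1)) auto
  have "(supnorm r0 (seg D s))\<^sup>2 \<le> exp (\<rho> * r0) * W / exp (\<rho> * s)"
  proof (rule power2_supnorm_le[OF continuous_on_seg[OF assms(1,4,5)] \<open>r0 \<ge> 0\<close>])
    fix \<theta> assume \<theta>: "\<theta> \<in> {-r0..0}"
    have "exp (\<rho> * s) \<le> exp (\<rho> * r0) * exp (\<rho> * (s + \<theta>))"
      using \<theta> mult_left_mono[of "-\<theta>" r0 \<rho>] \<open>\<rho> \<ge> 0\<close> by (simp add: algebra_simps flip: exp_add)
    then have "exp (\<rho> * s) * (norm (D (s + \<theta>)))\<^sup>2
        \<le> exp (\<rho> * r0) * (exp (\<rho> * (s + \<theta>)) * (norm (D (s + \<theta>)))\<^sup>2)"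
      by (simp add: mult_right_mono mult.assoc[symmetric])
    also have "\<dots> \<le> exp (\<rho> * r0) * W"
      unfolding W_def using \<theta> assms(4,5) by (intro mult_left_mono cSUP_upper bdd) auto
    finally have "exp (\<rho> * s) * (norm (D (s + \<theta>)))\<^sup>2 \<le> exp (\<rho> * r0) * W" .
    then show "(norm (seg D s \<theta>))\<^sup>2 \<le> exp (\<rho> * r0) * W / exp (\<rho> * s)"
      by (simp add: seg_def pos_le_divide_eq mult.commute)
  qed
  then show ?thesis
    unfolding W_def[symmetric] by (simp add: pos_le_divide_eq mult_ac)
qed

locale neutral_fde =
  fixes r0 \<kappa> L2 lam1 lam2 :: real
    and Z :: "real^'n \<Rightarrow> real^'n"
    and b :: "(real \<Rightarrow> real^'n) \<Rightarrow> real^'n"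
  assumes r0_pos: "r0 > 0"
    and kappa_pos: "0 < \<kappa>" and kappa_less_1: "\<kappa> < 1"
    and lam1_pos: "lam1 > 0" and lam2_pos: "lam2 > 0"
    and Z_cont: "continuous_on UNIV Z"
    and L2_pos: "L2 > 0"
    and b_lipschitz: "\<And>\<xi> \<eta>. continuous_on {-r0..0} \<xi> \<Longrightarrow> continuous_on {-r0..0} \<eta> \<Longrightarrow>
          norm (b \<xi> - b \<eta>) \<le> L2 * supnorm r0 (\<lambda>\<theta>. \<xi> \<theta> - \<eta> \<theta>)"
    and monotone: "\<And>\<xi> \<eta>. continuous_on {-r0..0} \<xi> \<Longrightarrow> continuous_on {-r0..0} \<eta> \<Longrightarrow>
        2 * inner (Z (\<xi> 0) - Z (\<eta> 0) + b \<xi> - b \<eta>)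
                  (\<xi> 0 - \<eta> 0 + Lop r0 \<kappa> (\<lambda>\<theta>. \<xi> \<theta> - \<eta> \<theta>))
        \<le> lam2 * (supnorm r0 (\<lambda>\<theta>. \<xi> \<theta> - \<eta> \<theta>))\<^sup>2 - lam1 * (norm (\<xi> 0 - \<eta> 0))\<^sup>2"
    and window_contraction: "\<kappa> * r0\<^sup>2 * exp (lam1 / (1 + \<kappa>) * r0) < 1"
begin

definition rho :: real where "rho = lam1 / (1 + \<kappa>)"
definition K :: real where "K = \<kappa> * r0\<^sup>2 * lam1 + lam2"
definition q :: real where "q = \<kappa> * r0\<^sup>2 * exp (rho * r0)"
definition beta :: real where "beta = K * exp (rho * r0) / ((1 - \<kappa>) * (1 - q))"
definition c :: real where "c = exp (rho * r0) * (1 + (1 + \<kappa> * r0)\<^sup>2 / (1 - \<kappa>)) / (1 - q)"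

lemma rho_pos: "rho > 0"
  using lam1_pos kappa_pos by (simp add: rho_def)

lemma rho_mult_one_plus_kappa: "rho * (1 + \<kappa>) = lam1"
  using kappa_pos by (simp add: rho_def)

lemma K_pos: "K > 0"
  using kappa_pos lam1_pos lam2_pos by (simp add: K_def add_nonneg_pos)

lemma q_less_1: "q < 1"
  using window_contraction by (simp add: q_def rho_def)

lemma beta_pos: "beta > 0"
  using K_pos kappa_less_1 q_less_1 by (simp add: beta_def)

lemma c_pos: "c > 0"
  using kappa_less_1 q_less_1 by (simp add: c_def add_pos_nonneg)

end

locale neutral_fde_pair = neutral_fde r0 \<kappa> L2 lam1 lam2 Z b
  for r0 \<kappa> L2 lam1 lam2 :: real
    and Z :: "real^'n \<Rightarrow> real^'n"
    and b :: "(real \<Rightarrow> real^'n) \<Rightarrow> real^'n" +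
  fixes \<sigma> :: "real^'n^'n" and w \<xi> \<eta> X Y :: "real \<Rightarrow> real^'n"
  assumes xi_cont: "continuous_on {-r0..0} \<xi>" and eta_cont: "continuous_on {-r0..0} \<eta>"
    and X_solution: "is_solution r0 \<kappa> Z b \<sigma> w \<xi> X"
    and Y_solution: "is_solution r0 \<kappa> Z b \<sigma> w \<eta> Y"
begin

definition D :: "real \<Rightarrow> real^'n" where "D u = X u - Y u"
definition S :: "real \<Rightarrow> real" where "S s = supnorm r0 (seg D s)"
definition g :: "real \<Rightarrow> real^'n" where "g s = Z (X s) + b (seg X s) - (Z (Y s) + b (seg Y s))"
definition M0 :: "real^'n" where "M0 = \<xi> 0 - \<eta> 0 + Lop r0 \<kappa> (\<lambda>\<theta>. \<xi> \<theta> - \<eta> \<theta>)"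
definition M :: "real \<Rightarrow> real^'n" where "M s = M0 + integral {0..s} g"
definition A :: real where "A = (supnorm r0 (\<lambda>\<theta>. \<xi> \<theta> - \<eta> \<theta>))\<^sup>2"
definition \<phi> :: "real \<Rightarrow> real" where "\<phi> s = exp (rho * s) * (S s)\<^sup>2"
definition W :: "real \<Rightarrow> real" where "W t = (SUP u\<in>{-r0..t}. exp (rho * u) * (norm (D u))\<^sup>2)"

lemma X_cont: "continuous_on {-r0..} X" and Y_cont: "continuous_on {-r0..} Y"
  using X_solution Y_solution by (simp_all add: is_solution_def)

lemma D_cont: "continuous_on {-r0..} D"
  unfolding D_def using X_cont Y_cont by (intro continuous_intros)

lemma seg_D: "seg D s = (\<lambda>\<theta>. seg X s \<theta> - seg Y s \<theta>)"
  by (simp add: seg_def D_def)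

lemma D_initial: "\<theta> \<in> {-r0..0} \<Longrightarrow> D \<theta> = \<xi> \<theta> - \<eta> \<theta>"
  using X_solution Y_solution by (simp add: is_solution_def D_def)

lemma D_plus_Lop_seg_D:
  assumes "s \<ge> 0"
  shows "D s + Lop r0 \<kappa> (seg D s) = M s"
proof -
  have "D s + Lop r0 \<kappa> (seg D s) = (X s + Lop r0 \<kappa> (seg X s)) - (Y s + Lop r0 \<kappa> (seg Y s))"
    unfolding seg_D using assms X_cont Y_cont by (simp add: Lop_diff continuous_on_seg_atLeast D_def)
  also have "\<dots> = (\<xi> 0 + Lop r0 \<kappa> \<xi> - (\<eta> 0 + Lop r0 \<kappa> \<eta>))
      + (integral {0..s} (\<lambda>s. Z (X s) + b (seg X s)) - integral {0..s} (\<lambda>s. Z (Y s) + b (seg Y s)))"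
    using X_solution Y_solution assms by (simp add: is_solution_def)
  also have "\<dots> = M s"
    unfolding M_def M0_def g_def using X_solution Y_solution assms xi_cont eta_cont
    by (simp add: is_solution_def integral_diff Lop_diff)
  finally show ?thesis .
qed

lemma g_cont: "continuous_on {0..} g"
proof -
  have "continuous_on {0..} (\<lambda>s. b (seg V s))" if "continuous_on {-r0..} V" for V
    using that r0_pos L2_pos b_lipschitz
    by (intro continuous_on_seg_compose[where C = L2]) (auto simp: dist_norm)
  moreover have "continuous_on {0..} (\<lambda>s. Z (V s))" if "continuous_on {-r0..} V" for V
    by (rule continuous_on_compose2[OF Z_cont continuous_on_subset[OF that]]) (use r0_pos in auto)
  ultimately show ?thesis
    unfolding g_def using X_cont Y_cont by (intro continuous_intros) auto
qed

lemma S_cont: "continuous_on {0..} S"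
  unfolding S_def using D_cont r0_pos
  by (intro continuous_on_seg_compose[where C = 1])
     (auto simp: dist_real_def intro!: abs_supnorm_diff_le)

lemma \<phi>_cont: "continuous_on {0..} \<phi>"
  unfolding \<phi>_def using S_cont by (intro continuous_intros)

lemma norm_Lop_seg_D_le: "s \<ge> 0 \<Longrightarrow> norm (Lop r0 \<kappa> (seg D s)) \<le> \<kappa> * r0 * S s"
  unfolding S_def using D_cont r0_pos kappa_pos by (intro norm_Lop_le continuous_on_seg_atLeast) auto

lemma M_dissipation:
  assumes "s \<ge> 0"
  shows "rho * (norm (M s))\<^sup>2 + 2 * inner (g s) (M s) \<le> K * (S s)\<^sup>2"
proof -
  define l where "l = norm (Lop r0 \<kappa> (seg D s))"
  have monotone_step: "2 * inner (g s) (M s) \<le> lam2 * (S s)\<^sup>2 - lam1 * (norm (D s))\<^sup>2"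
    using monotone[OF continuous_on_seg_atLeast[OF X_cont assms] continuous_on_seg_atLeast[OF Y_cont assms]]
    unfolding D_plus_Lop_seg_D[OF assms, symmetric] seg_D[symmetric] S_def
    by (simp add: g_def seg_def D_def algebra_simps)
  have "(norm (M s))\<^sup>2 \<le> (1 + \<kappa>) * (norm (D s))\<^sup>2 + (1 + \<kappa>) / \<kappa> * l\<^sup>2"
  proof -
    have "norm (M s) \<le> norm (D s) + l"
      unfolding l_def D_plus_Lop_seg_D[OF assms, symmetric] by (rule norm_triangle_ineq)
    then have "(norm (M s))\<^sup>2 \<le> (norm (D s) + l)\<^sup>2"
      by (simp add: power_mono)
    also have "\<dots> \<le> (norm (D s))\<^sup>2 / (1 / (1 + \<kappa>)) + l\<^sup>2 / (1 - 1 / (1 + \<kappa>))"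
      using kappa_pos by (intro power2_add_le_weighted) auto
    also have "\<dots> = (1 + \<kappa>) * (norm (D s))\<^sup>2 + (1 + \<kappa>) / \<kappa> * l\<^sup>2"
      using kappa_pos by (simp add: field_simps)
    finally show ?thesis .
  qed
  then have "rho * (norm (M s))\<^sup>2 \<le> rho * ((1 + \<kappa>) * (norm (D s))\<^sup>2 + (1 + \<kappa>) / \<kappa> * l\<^sup>2)"
    using rho_pos by (simp add: mult_left_mono)
  also have "\<dots> = rho * (1 + \<kappa>) * (norm (D s))\<^sup>2 + rho * (1 + \<kappa>) / \<kappa> * l\<^sup>2"
    by (simp add: algebra_simps)
  also have "\<dots> = lam1 * (norm (D s))\<^sup>2 + lam1 / \<kappa> * l\<^sup>2"
    by (simp only: rho_mult_one_plus_kappa)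
  also have "\<dots> \<le> lam1 * (norm (D s))\<^sup>2 + lam1 / \<kappa> * (\<kappa> * r0 * S s)\<^sup>2"
    unfolding l_def using norm_Lop_seg_D_le[OF assms] kappa_pos lam1_pos
    by (intro add_left_mono mult_left_mono power_mono) auto
  also have "\<dots> = lam1 * (norm (D s))\<^sup>2 + \<kappa> * r0\<^sup>2 * lam1 * (S s)\<^sup>2"
    using kappa_pos by (simp add: power_mult_distrib power2_eq_square)
  finally show ?thesis
    using monotone_step by (simp add: K_def algebra_simps)
qed

lemma D_bound:
  assumes "u \<ge> 0"
  shows "(norm (D u))\<^sup>2 \<le> (norm (M u))\<^sup>2 / (1 - \<kappa>) + \<kappa> * r0\<^sup>2 * (S u)\<^sup>2"
proof -
  define l where "l = norm (Lop r0 \<kappa> (seg D u))"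
  have "D u = M u - Lop r0 \<kappa> (seg D u)"
    using D_plus_Lop_seg_D[OF assms] by (simp add: algebra_simps)
  then have "norm (D u) \<le> norm (M u) + l"
    unfolding l_def by (metis norm_triangle_ineq4)
  then have "(norm (D u))\<^sup>2 \<le> (norm (M u) + l)\<^sup>2"
    by (simp add: power_mono)
  also have "\<dots> \<le> (norm (M u))\<^sup>2 / (1 - \<kappa>) + l\<^sup>2 / (1 - (1 - \<kappa>))"
    using kappa_pos kappa_less_1 by (intro power2_add_le_weighted) auto
  also have "l\<^sup>2 / (1 - (1 - \<kappa>)) \<le> (\<kappa> * r0 * S u)\<^sup>2 / \<kappa>"
    unfolding l_def using norm_Lop_seg_D_le[OF assms] kappa_pos
    by (auto intro!: divide_right_mono power_mono)
  also have "(\<kappa> * r0 * S u)\<^sup>2 / \<kappa> = \<kappa> * r0\<^sup>2 * (S u)\<^sup>2"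
    using kappa_pos by (simp add: power2_eq_square)
  finally show ?thesis by simp
qed

lemma M_energy:
  assumes "u \<ge> 0"
  shows "exp (rho * u) * (norm (M u))\<^sup>2 \<le> (norm M0)\<^sup>2 + K * integral {0..u} \<phi>"
proof -
  have g: "continuous_on {0..u} g"
    using g_cont by (rule continuous_on_subset) auto
  have "exp (rho * u) * (norm (M u))\<^sup>2
      \<le> (norm (M 0))\<^sup>2 + integral {0..u} (\<lambda>s. exp (rho * s) * (K * (S s)\<^sup>2))"
  proof (rule exp_weighted_norm_power2_le[OF assms])
    show "continuous_on {0..u} M"
      unfolding M_def using g by (intro continuous_intros continuous_on_integral)
    show "continuous_on {0..u} (\<lambda>s. K * (S s)\<^sup>2)"
      using S_cont by (intro continuous_intros continuous_on_subset[OF S_cont]) auto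
  next
    fix v assume v: "0 < v" "v < u"
    show "(M has_vector_derivative g v) (at v)"
      unfolding M_def[abs_def]
      using has_vector_derivative_integral_at[OF g v] by (auto intro!: derivative_eq_intros)
    show "rho * (norm (M v))\<^sup>2 + 2 * inner (g v) (M v) \<le> K * (S v)\<^sup>2"
      using v by (intro M_dissipation) auto
  qed
  then show ?thesis
    by (simp add: M_def \<phi>_def[abs_def] mult.left_commute)
qed

lemma D_initial_le: "u \<in> {-r0..0} \<Longrightarrow> (norm (D u))\<^sup>2 \<le> A"
  unfolding A_def D_initial using xi_cont eta_cont
  by (intro power_mono norm_le_supnorm continuous_intros) auto

lemma weighted_D_le_W:
  assumes "u \<in> {-r0..t}"
  shows "exp (rho * u) * (norm (D u))\<^sup>2 \<le> W t"
proof -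
  have "continuous_on {-r0..t} D"
    using D_cont by (rule continuous_on_subset) auto
  then have "bdd_above ((\<lambda>u. exp (rho * u) * (norm (D u))\<^sup>2) ` {-r0..t})"
    by (intro bounded_imp_bdd_above compact_imp_bounded compact_continuous_image
        continuous_intros) auto
  then show ?thesis
    unfolding W_def using assms by (rule cSUP_upper2) simp
qed

lemma \<phi>_le_W:
  assumes "0 \<le> s" "s \<le> t"
  shows "\<phi> s \<le> exp (rho * r0) * W t"
  unfolding \<phi>_def S_def W_def using assms r0_pos rho_pos
  by (intro exp_mult_power2_supnorm_seg_le continuous_on_subset[OF D_cont]) auto

lemma integral_\<phi>_mono:
  assumes "0 \<le> u" "u \<le> t"
  shows "integral {0..u} \<phi> \<le> integral {0..t} \<phi>"
  using assms
  by (intro integral_subset_le integrable_continuous_real continuous_on_subset[OF \<phi>_cont])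
     (auto simp: \<phi>_def)

lemma weighted_D_le:
  assumes "t \<ge> 0" "u \<in> {-r0..t}"
  shows "exp (rho * u) * (norm (D u))\<^sup>2
    \<le> A + ((norm M0)\<^sup>2 + K * integral {0..t} \<phi>) / (1 - \<kappa>) + q * W t"
proof -
  have W_nonneg: "W t \<ge> 0"
    using assms(1) r0_pos by (intro order_trans[OF _ weighted_D_le_W[of t t]]) auto
  have F_nonneg: "integral {0..t} \<phi> \<ge> 0"
    by (intro integral_nonneg integrable_continuous_real continuous_on_subset[OF \<phi>_cont])
       (auto simp: \<phi>_def)
  have rest_nonneg: "((norm M0)\<^sup>2 + K * integral {0..t} \<phi>) / (1 - \<kappa>) + q * W t \<ge> 0"
    using F_nonneg W_nonneg K_pos kappa_less_1 kappa_pos r0_pos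
    by (intro add_nonneg_nonneg divide_nonneg_pos) (auto simp: q_def)
  show ?thesis
  proof (cases "u \<le> 0")
    case True
    then have "exp (rho * u) * (norm (D u))\<^sup>2 \<le> (norm (D u))\<^sup>2"
      using rho_pos by (intro mult_left_le_one_le) (auto simp: mult_nonneg_nonpos)
    also have "\<dots> \<le> A"
      using assms(2) True by (intro D_initial_le) auto
    finally show ?thesis using rest_nonneg by linarith
  next
    case False
    then have u: "u \<ge> 0" by simp
    have "exp (rho * u) * (norm (D u))\<^sup>2
        \<le> exp (rho * u) * ((norm (M u))\<^sup>2 / (1 - \<kappa>) + \<kappa> * r0\<^sup>2 * (S u)\<^sup>2)"
      using D_bound[OF u] by (simp add: mult_left_mono)
    also have "\<dots> = exp (rho * u) * (norm (M u))\<^sup>2 / (1 - \<kappa>) + \<kappa> * r0\<^sup>2 * \<phi> u"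
      by (simp add: \<phi>_def algebra_simps)
    also have "\<dots> \<le> ((norm M0)\<^sup>2 + K * integral {0..t} \<phi>) / (1 - \<kappa>)
        + \<kappa> * r0\<^sup>2 * (exp (rho * r0) * W t)"
    proof (intro add_mono divide_right_mono mult_left_mono)
      show "exp (rho * u) * (norm (M u))\<^sup>2 \<le> (norm M0)\<^sup>2 + K * integral {0..t} \<phi>"
        using M_energy[OF u] assms(2)
          mult_left_mono[OF integral_\<phi>_mono[OF u, of t] less_imp_le[OF K_pos]]
        by auto
      show "\<phi> u \<le> exp (rho * r0) * W t"
        using assms(2) u by (intro \<phi>_le_W) auto
    qed (use kappa_pos kappa_less_1 in auto)
    also have "\<dots> = ((norm M0)\<^sup>2 + K * integral {0..t} \<phi>) / (1 - \<kappa>) + q * W t"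
      by (simp add: q_def)
    moreover have "A \<ge> 0" by (simp add: A_def)
    ultimately show ?thesis by linarith
  qed
qed

lemma W_le:
  assumes "t \<ge> 0"
  shows "W t \<le> (A + ((norm M0)\<^sup>2 + K * integral {0..t} \<phi>) / (1 - \<kappa>)) / (1 - q)"
proof -
  have "W t \<le> A + ((norm M0)\<^sup>2 + K * integral {0..t} \<phi>) / (1 - \<kappa>) + q * W t"
    unfolding W_def using weighted_D_le[OF assms] assms r0_pos
    by (subst (2) W_def[symmetric]) (rule cSUP_least; auto)
  then show ?thesis
    using q_less_1 by (simp add: pos_le_divide_eq algebra_simps)
qed

lemma norm_M0_le: "(norm M0)\<^sup>2 \<le> (1 + \<kappa> * r0)\<^sup>2 * A"
proof -
  have c: "continuous_on {-r0..0} (\<lambda>\<theta>. \<xi> \<theta> - \<eta> \<theta>)"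
    using xi_cont eta_cont by (intro continuous_intros)
  have "norm M0 \<le> norm (\<xi> 0 - \<eta> 0) + norm (Lop r0 \<kappa> (\<lambda>\<theta>. \<xi> \<theta> - \<eta> \<theta>))"
    unfolding M0_def by (rule norm_triangle_ineq)
  also have "\<dots> \<le> (1 + \<kappa> * r0) * supnorm r0 (\<lambda>\<theta>. \<xi> \<theta> - \<eta> \<theta>)"
    using norm_le_supnorm[OF c, of 0] r0_pos
      norm_Lop_le[OF c less_imp_le[OF r0_pos] less_imp_le[OF kappa_pos]]
    by (simp add: algebra_simps)
  finally show ?thesis
    unfolding A_def power_mult_distrib[symmetric] by (intro power_mono) auto
qed

lemma \<phi>_le:
  assumes "t \<ge> 0"
  shows "\<phi> t \<le> c * A + beta * integral {0..t} \<phi>"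
proof -
  have "\<phi> t \<le> exp (rho * r0) * W t"
    using assms by (intro \<phi>_le_W) auto
  also have "\<dots> \<le> exp (rho * r0)
      * ((A + ((norm M0)\<^sup>2 + K * integral {0..t} \<phi>) / (1 - \<kappa>)) / (1 - q))"
    by (rule mult_left_mono[OF W_le[OF assms]]) simp
  also have "\<dots> = exp (rho * r0) * (A + (norm M0)\<^sup>2 / (1 - \<kappa>)) / (1 - q)
      + beta * integral {0..t} \<phi>"
    by (simp add: beta_def add_divide_distrib distrib_left)
  also have "exp (rho * r0) * (A + (norm M0)\<^sup>2 / (1 - \<kappa>)) / (1 - q) \<le> c * A"
  proof -
    have "A + (norm M0)\<^sup>2 / (1 - \<kappa>) \<le> (1 + (1 + \<kappa> * r0)\<^sup>2 / (1 - \<kappa>)) * A"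
      using norm_M0_le kappa_less_1 divide_right_mono[of _ _ "1 - \<kappa>"]
      by (simp add: algebra_simps)
    then show ?thesis
      using q_less_1 by (simp add: c_def divide_right_mono mult_left_mono)
  qed
  finally show ?thesis by simp
qed

lemma segment_decay:
  assumes "t \<ge> 0"
  shows "(S t)\<^sup>2 \<le> c * exp (- (rho - beta) * t) * A"
proof -
  have "\<phi> t \<le> c * A * exp (beta * t)"
    using \<phi>_cont assms beta_pos \<phi>_le
    by (intro gronwall_exp continuous_on_subset[OF \<phi>_cont]) auto
  moreover have "(S t)\<^sup>2 = \<phi> t * exp (- (rho * t))"
    by (simp add: \<phi>_def exp_minus)
  ultimately have "(S t)\<^sup>2 \<le> c * A * exp (beta * t) * exp (- (rho * t))"
    by (simp add: mult_right_mono)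
  also have "\<dots> = c * exp (- (rho - beta) * t) * A"
    by (simp add: algebra_simps flip: exp_add)
  finally show ?thesis .
qed

end

(* The Lipschitz property of Z is used only for its continuity. *)
theorem lemma2p5:
  fixes r0 \<kappa> L1 L2 lam1 lam2 :: real
    and Z :: "real^'n \<Rightarrow> real^'n"
    and b :: "(real \<Rightarrow> real^'n) \<Rightarrow> real^'n"
    and \<sigma> :: "real^'n^'n"
  assumes r0: "r0 > 0"
    and kappa: "0 < \<kappa>" "\<kappa> < 1"
    and sigma: "invertible \<sigma>"
    and L1: "L1 > 0" "\<And>x y. norm (Z x - Z y) \<le> L1 * norm (x - y)"
    and L2: "L2 > 0"
      "\<And>\<xi> \<eta>. continuous_on {-r0..0} \<xi> \<Longrightarrow> continuous_on {-r0..0} \<eta> \<Longrightarrow>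
          norm (b \<xi> - b \<eta>) \<le> L2 * supnorm r0 (\<lambda>\<theta>. \<xi> \<theta> - \<eta> \<theta>)"
    and lam: "lam1 > lam2" "lam2 > 0"
    and mono: "\<And>\<xi> \<eta>. continuous_on {-r0..0} \<xi> \<Longrightarrow> continuous_on {-r0..0} \<eta> \<Longrightarrow>
        2 * inner (Z (\<xi> 0) - Z (\<eta> 0) + b \<xi> - b \<eta>)
                  (\<xi> 0 - \<eta> 0 + Lop r0 \<kappa> (\<lambda>\<theta>. \<xi> \<theta> - \<eta> \<theta>))
        \<le> lam2 * (supnorm r0 (\<lambda>\<theta>. \<xi> \<theta> - \<eta> \<theta>))\<^sup>2 - lam1 * (norm (\<xi> 0 - \<eta> 0))\<^sup>2"
    and cond1: "1 - \<kappa> * r0\<^sup>2 * exp (lam1 / (1 + \<kappa>) * r0) > 0"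
    and cond2: "lam1 / (1 + \<kappa>)
        - (\<kappa> * r0\<^sup>2 * lam1 + lam2) * exp (lam1 / (1 + \<kappa>) * r0)
          / ((1 - \<kappa>) * (1 - \<kappa> * r0\<^sup>2 * exp (lam1 / (1 + \<kappa>) * r0))) > 0"
  shows "\<exists>c>0. \<forall>w \<xi> \<eta> X Y t.
      continuous_on {0..} w \<longrightarrow>
      continuous_on {-r0..0} \<xi> \<longrightarrow> continuous_on {-r0..0} \<eta> \<longrightarrow>
      is_solution r0 \<kappa> Z b \<sigma> w \<xi> X \<longrightarrow> is_solution r0 \<kappa> Z b \<sigma> w \<eta> Y \<longrightarrow>
      t \<ge> 0 \<longrightarrow>
      (supnorm r0 (\<lambda>\<theta>. seg X t \<theta> - seg Y t \<theta>))\<^sup>2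
        \<le> c * exp (- (lam1 / (1 + \<kappa>)
              - (\<kappa> * r0\<^sup>2 * lam1 + lam2) * exp (lam1 / (1 + \<kappa>) * r0)
                / ((1 - \<kappa>) * (1 - \<kappa> * r0\<^sup>2 * exp (lam1 / (1 + \<kappa>) * r0)))) * t)
          * (supnorm r0 (\<lambda>\<theta>. \<xi> \<theta> - \<eta> \<theta>))\<^sup>2"
proof -
  have "L1-lipschitz_on UNIV Z"
    using L1 by (simp add: lipschitz_on_def dist_norm)
  then interpret neutral_fde r0 \<kappa> L2 lam1 lam2 Z b
    using r0 kappa lam L2 mono cond1 by unfold_locales (auto intro: lipschitz_on_continuous_on)
  show ?thesis
  proof (intro exI[of _ c] conjI allI impI)
    fix w \<xi> \<eta> X Y and t :: real
    assume "continuous_on {-r0..0} \<xi>" "continuous_on {-r0..0} \<eta>"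
      and "is_solution r0 \<kappa> Z b \<sigma> w \<xi> X" "is_solution r0 \<kappa> Z b \<sigma> w \<eta> Y" and "t \<ge> 0"
    then interpret neutral_fde_pair r0 \<kappa> L2 lam1 lam2 Z b \<sigma> w \<xi> \<eta> X Y
      by unfold_locales
    show "(supnorm r0 (\<lambda>\<theta>. seg X t \<theta> - seg Y t \<theta>))\<^sup>2
        \<le> c * exp (- (lam1 / (1 + \<kappa>)
              - (\<kappa> * r0\<^sup>2 * lam1 + lam2) * exp (lam1 / (1 + \<kappa>) * r0)
                / ((1 - \<kappa>) * (1 - \<kappa> * r0\<^sup>2 * exp (lam1 / (1 + \<kappa>) * r0)))) * t)
          * (supnorm r0 (\<lambda>\<theta>. \<xi> \<theta> - \<eta> \<theta>))\<^sup>2"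
      using segment_decay[OF \<open>t \<ge> 0\<close>]
      by (simp add: S_def seg_D A_def rho_def beta_def K_def q_def)
  qed (rule c_pos)
qed

end
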